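(* For every $d\in\mathbb{N}$, $d\ge1$, we have $\mathcal H_1^d\subset\mathcal N_d=b_d^{-1}(\mathcal H_1^d)$.
   Context: Identify $b=(b_1,\dots,b_d)\in\mathbb{R}^d$ with the monic polynomial $z^d+\sum_{k=1}^d b_k z^{d-k}$, and let $\mathcal H_1^d\subset\mathbb{R}^d$ be the set of $b$ for which this polynomial is hyperbolic (has only real roots). A sequence $a=(a_1,\dots,a_d)\in\mathbb{R}^d$ is a Nuij sequence if for every hyperbolic polynomial $p\in\mathbb{R}[z]$ of degree $d$, the polynomial $p(z)+\sum_{k=1}^d a_k s^k p^{(k)}(z)$ is hyperbolic for every $s\in\mathbb{R}$; $\mathcal N_d$ is the set of Nuij sequences in $\mathbb{R}^d$. The linear map $b_d:\mathbb{R}^d\to\mathbb{R}^d$ is $b_d(a_1,\dots,a_d)=\big(da_1,\dots,\tfrac{d!}{(d-k)!}a_k,\dots,d!\,a_d\big)$. *)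

theory Defs
  imports Complex_Main "HOL-Computational_Algebra.Polynomial"
begin

text \<open>A real polynomial is hyperbolic if all of its complex roots are real.
  (The zero polynomial is not hyperbolic, since every complex number is a root.)\<close>
definition hyperbolic :: "real poly \<Rightarrow> bool" where
  "hyperbolic p \<longleftrightarrow> (\<forall>z::complex. poly (map_poly of_real p) z = 0 \<longrightarrow> z \<in> \<real>)"

text \<open>Vectors in R^d are lists of length d; the entry b_k (1 \<le> k \<le> d) is b ! (k-1).\<close>
definition monic_of :: "real list \<Rightarrow> real poly" where
  "monic_of b = monom 1 (length b) + (\<Sum>k=1..length b. monom (b ! (k - 1)) (length b - k))"

definition H1 :: "nat \<Rightarrow> real list set" where
  "H1 d = {b. length b = d \<and> hyperbolic (monic_of b)}"

definition nuij_op :: "real list \<Rightarrow> real \<Rightarrow> real poly \<Rightarrow> real poly" where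
  "nuij_op a s p = p + (\<Sum>k=1..length a. smult (a ! (k - 1) * s ^ k) ((pderiv ^^ k) p))"

definition Nuij :: "nat \<Rightarrow> real list set" where
  "Nuij d = {a. length a = d \<and>
     (\<forall>p. hyperbolic p \<and> degree p = d \<longrightarrow> (\<forall>s::real. hyperbolic (nuij_op a s p)))}"

definition bmap :: "nat \<Rightarrow> real list \<Rightarrow> real list" where
  "bmap d a = map (\<lambda>k. fact d / fact (d - k) * a ! (k - 1)) [1..<d+1]"

end

theory Submission
  imports Defs "HOL-Computational_Algebra.Fundamental_Theorem_Algebra" "HOL-Analysis.Convex"
begin

text \<open>A real polynomial is hyperbolic iff it has no zeros in the upper half plane, where the
  logarithmic derivative \<open>p'/p = \<Sum> 1/(z - r\<^sub>j)\<close> of a hyperbolic \<open>p\<close> has negative imaginary part.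
  This gives Laguerre's theorem that \<open>p - a p'\<close> is hyperbolic, and the hyperbolicity of polar
  derivatives.

  The Nuij operator of \<open>b\<close> has symbol \<open>monic_of (dilate s b)\<close>; if this is \<open>\<Prod>(x - r\<^sub>j)\<close>, the
  operator is \<open>\<Prod>(1 - r\<^sub>j D)\<close>, so \<open>b \<in> H1 d\<close> makes it preserve hyperbolicity by Laguerre's theorem.

  Applied to \<open>x\<^sup>d\<close> with \<open>s = 1\<close>, the Nuij operator of \<open>a\<close> yields \<open>monic_of (bmap d a)\<close>, so Nuij
  sequences satisfy \<open>bmap d a \<in> H1 d\<close>. Conversely, by Grace's identity the Nuij operator applied to
  \<open>\<Prod>(x - r\<^sub>j)\<close> and evaluated at \<open>z\<close> is the symmetric polarization of \<open>Q = monic_of (dilate s (bmap d a))\<close>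
  at the points \<open>z - r\<^sub>j\<close>. If \<open>Im z > 0\<close> these lie in the upper half plane, where the polarization of
  the hyperbolic \<open>Q\<close> does not vanish by the Grace--Walsh--Szego theorem.\<close>

section \<open>Hyperbolic polynomials\<close>

declare mult_pCons_left [simp del] mult_pCons_right [simp del]

definition cpoly :: "real poly \<Rightarrow> complex \<Rightarrow> complex" where
  "cpoly p = poly (map_poly complex_of_real p)"

lemma cpoly_add [simp]: "cpoly (p + q) z = cpoly p z + cpoly q z"
proof -
  have "map_poly complex_of_real (p + q) = map_poly of_real p + map_poly of_real q"
    by (rule poly_eqI) (simp add: coeff_map_poly)
  thus ?thesis by (simp add: cpoly_def)
qed

lemma cpoly_diff [simp]: "cpoly (p - q) z = cpoly p z - cpoly q z"
proof -
  have "map_poly complex_of_real (p - q) = map_poly of_real p - map_poly of_real q"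
    by (rule poly_eqI) (simp add: coeff_map_poly)
  thus ?thesis by (simp add: cpoly_def)
qed

lemma cpoly_mult [simp]: "cpoly (p * q) z = cpoly p z * cpoly q z"
proof -
  have "map_poly complex_of_real (p * q) = map_poly of_real p * map_poly of_real q"
    by (rule poly_eqI) (simp add: coeff_map_poly coeff_mult)
  thus ?thesis by (simp add: cpoly_def)
qed

lemma cpoly_smult [simp]: "cpoly (smult c p) z = of_real c * cpoly p z"
  by (simp add: cpoly_def map_poly_smult)

lemma cpoly_pCons [simp]: "cpoly (pCons a p) z = of_real a + z * cpoly p z"
  by (simp add: cpoly_def map_poly_pCons)

lemma cpoly_0 [simp]: "cpoly 0 z = 0"
  by (simp add: cpoly_def)

lemma cpoly_1 [simp]: "cpoly 1 z = 1"
  by (simp add: cpoly_def)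

lemma cpoly_monom [simp]: "cpoly (monom c n) z = of_real c * z ^ n"
  by (simp add: cpoly_def map_poly_monom poly_monom)

lemma cpoly_sum: "cpoly (sum f A) z = (\<Sum>x\<in>A. cpoly (f x) z)"
  by (induct A rule: infinite_finite_induct) auto

lemma cpoly_prod: "cpoly (prod f A) z = (\<Prod>x\<in>A. cpoly (f x) z)"
  by (induct A rule: infinite_finite_induct) auto

lemma cpoly_of_real [simp]: "cpoly p (of_real x) = of_real (poly p x)"
  by (induct p) (auto simp: algebra_simps)

lemma cpoly_cnj: "cpoly p (cnj z) = cnj (cpoly p z)"
  by (induct p) auto

lemma hyperbolic_cpoly: "hyperbolic p \<longleftrightarrow> (\<forall>z. cpoly p z = 0 \<longrightarrow> z \<in> \<real>)"
  by (simp add: hyperbolic_def cpoly_def)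

lemma hyperbolic_iff_upper_half_plane: "hyperbolic p \<longleftrightarrow> (\<forall>z. 0 < Im z \<longrightarrow> cpoly p z \<noteq> 0)"
proof
  assume "hyperbolic p"
  thus "\<forall>z. 0 < Im z \<longrightarrow> cpoly p z \<noteq> 0"
    by (auto simp: hyperbolic_cpoly complex_is_Real_iff)
next
  assume H: "\<forall>z. 0 < Im z \<longrightarrow> cpoly p z \<noteq> 0"
  show "hyperbolic p" unfolding hyperbolic_cpoly
  proof (intro allI impI)
    fix z assume z: "cpoly p z = 0"
    have "cpoly p (cnj z) = 0" using z by (simp add: cpoly_cnj)
    with H z have "\<not> 0 < Im z" "\<not> 0 < Im (cnj z)" by blast+
    thus "z \<in> \<real>" by (simp add: complex_is_Real_iff)
  qed
qed

lemma hyperbolic_nonzero: "hyperbolic p \<Longrightarrow> p \<noteq> 0"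
  by (metis hyperbolic_iff_upper_half_plane cpoly_0 imaginary_unit.sel(2) zero_less_one)

lemma hyperbolic_smult_iff: "c \<noteq> 0 \<Longrightarrow> hyperbolic (smult c p) \<longleftrightarrow> hyperbolic p"
  by (simp add: hyperbolic_cpoly)

lemma hyperbolic_cong: "(\<And>z. cpoly p z = cpoly q z) \<Longrightarrow> hyperbolic p \<longleftrightarrow> hyperbolic q"
  by (simp add: hyperbolic_cpoly)

lemma hyperbolic_factor:
  assumes "hyperbolic p"
  shows "\<exists>r. p = smult (lead_coeff p) (\<Prod>j<degree p. [:- r j, 1:])"
  using assms
proof (induct "degree p" arbitrary: p)
  case 0
  then obtain c where "p = [:c:]" by (metis degree_eq_zeroE)
  then show ?case by simp
next
  case (Suc n)
  have "\<not> constant (poly (map_poly complex_of_real p))"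
    using Suc(2) by (simp add: constant_degree degree_map_poly)
  then obtain z where "cpoly p z = 0"
    unfolding cpoly_def using fundamental_theorem_of_algebra by blast
  moreover from this Suc(3) have "z \<in> \<real>" by (simp add: hyperbolic_cpoly)
  ultimately obtain x where "poly p x = 0" by (auto elim: Reals_cases)
  then obtain q where pq: "p = [:-x, 1:] * q" by (metis dvdE poly_eq_0_iff_dvd)
  with Suc(2) have "q \<noteq> 0" by auto
  with pq Suc(2) have dq: "degree q = n"
    by (simp add: degree_mult_eq)
  have lq: "lead_coeff q = lead_coeff p"
    unfolding pq lead_coeff_mult by simp
  have "hyperbolic q"
    using Suc(3) unfolding pq hyperbolic_cpoly by simp
  with Suc(1) dq obtain r where r: "q = smult (lead_coeff p) (\<Prod>j<n. [:- r j, 1:])"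
    using lq by metis
  define r' where "r' j = (if j = 0 then x else r (j - 1))" for j
  have "p = smult (lead_coeff p) (\<Prod>j<Suc n. [:- r' j, 1:])"
    by (subst pq, subst r) (simp add: r'_def prod.lessThan_Suc_shift del: prod.lessThan_Suc)
  then show ?case by (metis Suc(2))
qed

lemma cpoly_pderiv_prod_linear:
  fixes n :: nat
  assumes "cpoly (\<Prod>j<n. [:- r j, 1:]) w \<noteq> 0"
  shows "cpoly (pderiv (\<Prod>j<n. [:- r j, 1:])) w
           = cpoly (\<Prod>j<n. [:- r j, 1:]) w * (\<Sum>j<n. 1 / (w - of_real (r j)))"
  using assms
proof (induct n)
  case (Suc n)
  let ?P = "\<Prod>j<n. [:- r j, 1:]"
  have nz: "w - of_real (r n) \<noteq> 0" "cpoly ?P w \<noteq> 0"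
    using Suc(2) by (auto simp: cpoly_prod)
  have "pderiv (\<Prod>j<Suc n. [:- r j, 1:]) = pderiv ?P * [:- r n, 1:] + ?P"
    by (simp add: pderiv_mult pderiv_pCons)
  then have "cpoly (pderiv (\<Prod>j<Suc n. [:- r j, 1:])) w
      = cpoly (pderiv ?P) w * (w - of_real (r n)) + cpoly ?P w"
    by simp
  also have "\<dots> = cpoly ?P w * (w - of_real (r n))
                   * ((\<Sum>j<n. 1 / (w - of_real (r j))) + 1 / (w - of_real (r n)))"
    using Suc(1) nz by (simp add: field_simps)
  also have "\<dots> = cpoly (\<Prod>j<Suc n. [:- r j, 1:]) w * (\<Sum>j<Suc n. 1 / (w - of_real (r j)))"
    by simp
  finally show ?case .
qed simp

lemma hyperbolic_logderiv:
  assumes "hyperbolic p"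
  obtains r where "p = smult (lead_coeff p) (\<Prod>j<degree p. [:- r j, 1:])"
    and "\<And>w. 0 < Im w \<Longrightarrow>
           cpoly (pderiv p) w = cpoly p w * (\<Sum>j<degree p. 1 / (w - of_real (r j)))"
proof -
  obtain r where r: "p = smult (lead_coeff p) (\<Prod>j<degree p. [:- r j, 1:])"
    using hyperbolic_factor[OF assms] by blast
  let ?P = "\<Prod>j<degree p. [:- r j, 1:]"
  have "cpoly (pderiv p) w = cpoly p w * (\<Sum>j<degree p. 1 / (w - of_real (r j)))"
    if "0 < Im w" for w
  proof -
    have "cpoly p w \<noteq> 0"
      using assms that by (simp add: hyperbolic_iff_upper_half_plane)
    moreover have p_eval: "cpoly p w = of_real (lead_coeff p) * cpoly ?P w"
      by (subst r) simp
    ultimately have "cpoly ?P w \<noteq> 0"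
      by simp
    have "pderiv p = smult (lead_coeff p) (pderiv ?P)"
      by (subst r) (rule pderiv_smult)
    then have "cpoly (pderiv p) w = of_real (lead_coeff p) * cpoly (pderiv ?P) w"
      by simp
    also have "\<dots> = cpoly p w * (\<Sum>j<degree p. 1 / (w - of_real (r j)))"
      using cpoly_pderiv_prod_linear[OF \<open>cpoly ?P w \<noteq> 0\<close>] p_eval by simp
    finally show ?thesis .
  qed
  with r that show thesis by blast
qed

lemma Im_inverse_sub_of_real:
  "Im (1 / (w - of_real r)) = - Im w / ((Re w - r)\<^sup>2 + (Im w)\<^sup>2)"
  by (simp add: Im_divide power2_eq_square)

lemma Im_sum_inverse_sub_neg:
  fixes n :: nat
  assumes "0 < Im w" "0 < n"
  shows "Im (\<Sum>j<n. 1 / (w - of_real (r j))) < 0"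
proof -
  have "0 < (\<Sum>j<n. Im w / ((Re w - r j)\<^sup>2 + (Im w)\<^sup>2))"
    using assms by (intro sum_pos) (auto simp: add_nonneg_pos)
  then show ?thesis
    by (simp add: Im_sum Im_inverse_sub_of_real sum_negf)
qed

lemma hyperbolic_pderiv:
  assumes "hyperbolic p" "0 < degree p"
  shows "hyperbolic (pderiv p)"
  unfolding hyperbolic_iff_upper_half_plane
proof (intro allI impI)
  fix w :: complex assume w: "0 < Im w"
  obtain r where logderiv: "cpoly (pderiv p) w = cpoly p w * (\<Sum>j<degree p. 1 / (w - of_real (r j)))"
    using hyperbolic_logderiv[OF assms(1)] w by metis
  have "(\<Sum>j<degree p. 1 / (w - of_real (r j))) \<noteq> 0"
    using Im_sum_inverse_sub_neg[OF w assms(2), of r] by force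
  with logderiv assms(1) w show "cpoly (pderiv p) w \<noteq> 0"
    by (simp add: hyperbolic_iff_upper_half_plane)
qed

lemma hyperbolic_diff_smult_pderiv:
  assumes "hyperbolic p"
  shows "hyperbolic (p - smult a (pderiv p))"
  unfolding hyperbolic_iff_upper_half_plane
proof (intro allI impI notI)
  fix w :: complex assume w: "0 < Im w" and root: "cpoly (p - smult a (pderiv p)) w = 0"
  obtain r where logderiv: "cpoly (pderiv p) w = cpoly p w * (\<Sum>j<degree p. 1 / (w - of_real (r j)))"
    using hyperbolic_logderiv[OF assms] w by metis
  define S where "S = (\<Sum>j<degree p. 1 / (w - of_real (r j)))"
  have "cpoly p w * (1 - of_real a * S) = 0"
    using root logderiv unfolding S_def by (simp add: algebra_simps)
  with assms w have aS: "of_real a * S = 1"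
    by (simp add: hyperbolic_iff_upper_half_plane)
  then have "Im (of_real a * S) = 0" "S \<noteq> 0"
    by auto
  then have "a * Im S = 0" "S \<noteq> 0"
    by simp_all
  moreover have "Im S < 0" if "S \<noteq> 0"
    using that w Im_sum_inverse_sub_neg[OF w, of "degree p" r] unfolding S_def
    by (cases "degree p = 0") auto
  ultimately show False using aS by auto
qed

lemma Re_Im_sub_divide_sub:
  fixes r t :: real and w :: complex
  defines "d \<equiv> (Re w - r)\<^sup>2 + (Im w)\<^sup>2"
  assumes "0 < Im w"
  shows "Re ((w - of_real t) / (w - of_real r)) = 1 + (Re w - t) * ((r - t) / d) - (r - t)\<^sup>2 / d"
    and "Im ((w - of_real t) / (w - of_real r)) = - Im w * ((r - t) / d)"
proof -
  have "0 < d"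
    unfolding d_def using assms(2) by (simp add: add_nonneg_pos)
  have "Re ((w - of_real t) / (w - of_real r)) = ((Re w - t) * (Re w - r) + (Im w)\<^sup>2) / d"
    by (simp add: Re_divide d_def power2_eq_square)
  also have "\<dots> = (d + (Re w - t) * (r - t) - (r - t)\<^sup>2) / d"
    by (rule arg_cong[where f="\<lambda>x. x / d"]) (simp add: d_def power2_eq_square algebra_simps)
  also have "\<dots> = 1 + (Re w - t) * ((r - t) / d) - (r - t)\<^sup>2 / d"
    using \<open>0 < d\<close> by (simp add: field_simps)
  finally show "Re ((w - of_real t) / (w - of_real r)) = 1 + (Re w - t) * ((r - t) / d) - (r - t)\<^sup>2 / d" .
  have "Im ((w - of_real t) / (w - of_real r)) = (Im w * (Re w - r) - (Re w - t) * Im w) / d"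
    by (simp add: Im_divide d_def power2_eq_square)
  then show "Im ((w - of_real t) / (w - of_real r)) = - Im w * ((r - t) / d)"
    by (simp add: algebra_simps diff_divide_distrib)
qed

lemma sum_ratio_eq_count_imp_roots_eq:
  fixes m N :: nat
  assumes w: "0 < Im w" and "m \<le> N"
    and sum_eq: "(\<Sum>j<m. (w - of_real t) / (w - of_real (r j))) = of_nat N"
  shows "m = N" and "\<And>j. j < m \<Longrightarrow> r j = t"
proof -
  define d where "d j = (Re w - r j)\<^sup>2 + (Im w)\<^sup>2" for j
  have d_pos: "0 < d j" for j
    unfolding d_def using w by (simp add: add_nonneg_pos)
  have "Im (\<Sum>j<m. (w - of_real t) / (w - of_real (r j))) = - Im w * (\<Sum>j<m. (r j - t) / d j)"
    unfolding Im_sum d_def Re_Im_sub_divide_sub(2)[OF w] by (simp add: sum_distrib_left)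
  with sum_eq w have first_moment: "(\<Sum>j<m. (r j - t) / d j) = 0"
    by simp
  have "Re (\<Sum>j<m. (w - of_real t) / (w - of_real (r j)))
      = real m + (Re w - t) * (\<Sum>j<m. (r j - t) / d j) - (\<Sum>j<m. (r j - t)\<^sup>2 / d j)"
    unfolding Re_sum d_def Re_Im_sub_divide_sub(1)[OF w]
    by (simp add: sum.distrib sum_subtractf sum_distrib_left)
  with sum_eq first_moment have "real m - (\<Sum>j<m. (r j - t)\<^sup>2 / d j) = real N"
    by simp
  moreover have nonneg: "0 \<le> (r j - t)\<^sup>2 / d j" for j
    by (simp add: d_def)
  ultimately have "m = N" and "(\<Sum>j<m. (r j - t)\<^sup>2 / d j) = 0"
    using \<open>m \<le> N\<close> sum_nonneg[of "{..<m}" "\<lambda>j. (r j - t)\<^sup>2 / d j"] by force+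
  then show "m = N" by simp
  from \<open>(\<Sum>j<m. (r j - t)\<^sup>2 / d j) = 0\<close> have "(r j - t)\<^sup>2 / d j = 0" if "j < m" for j
    using that nonneg by (simp add: sum_nonneg_eq_0_iff)
  with d_pos show "r j = t" if "j < m" for j
    using that by (metis divide_eq_0_iff less_irrefl power_eq_0_iff right_minus_eq)
qed

text \<open>The polynomial below is the polar derivative of \<open>Q\<close>, of formal degree \<open>N\<close>, at the pole \<open>t\<close>;
  the excluded case is the one where it vanishes identically.\<close>
lemma hyperbolic_polar_derivative:
  fixes N :: nat
  assumes hyp: "hyperbolic Q" and deg: "degree Q \<le> N"
    and not_power: "\<And>c. Q \<noteq> smult c ([:-t, 1:] ^ N)"
  shows "hyperbolic (Q - smult (1 / real N) ([:-t, 1:] * pderiv Q))"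
  unfolding hyperbolic_iff_upper_half_plane
proof (intro allI impI notI)
  fix w :: complex
  assume w: "0 < Im w" and root: "cpoly (Q - smult (1 / real N) ([:-t, 1:] * pderiv Q)) w = 0"
  obtain r where r: "Q = smult (lead_coeff Q) (\<Prod>j<degree Q. [:- r j, 1:])"
    and logderiv: "cpoly (pderiv Q) w = cpoly Q w * (\<Sum>j<degree Q. 1 / (w - of_real (r j)))"
    using hyperbolic_logderiv[OF hyp] w by metis
  define T where "T = (\<Sum>j<degree Q. (w - of_real t) / (w - of_real (r j)))"
  have T_factor: "T = (w - of_real t) * (\<Sum>j<degree Q. 1 / (w - of_real (r j)))"
    unfolding T_def by (simp add: sum_distrib_left)
  have "cpoly (Q - smult (1 / real N) ([:-t, 1:] * pderiv Q)) w
      = cpoly Q w - of_real (1 / real N) * ((w - of_real t) * cpoly (pderiv Q) w)"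
    by (simp add: algebra_simps)
  also have "\<dots> = cpoly Q w * (1 - of_real (1 / real N) * T)"
    unfolding logderiv T_factor by (simp add: algebra_simps)
  finally have "cpoly Q w * (1 - of_real (1 / real N) * T) = 0"
    using root by simp
  with hyp w have "of_real (1 / real N) * T = 1"
    by (simp add: hyperbolic_iff_upper_half_plane)
  then have "T = of_nat N"
    by (auto simp: field_simps)
  with w deg have "degree Q = N" "\<And>j. j < degree Q \<Longrightarrow> r j = t"
    unfolding T_def by (blast intro: sum_ratio_eq_count_imp_roots_eq)+
  then have "(\<Prod>j<degree Q. [:- r j, 1:]) = [:- t, 1:] ^ N"
    by simp
  with r not_power show False
    by metis
qed

section \<open>Nuij operators with hyperbolic symbol\<close>

lemma smult_sum_right: "smult a (sum f S) = (\<Sum>i\<in>S. smult a (f i))"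
  by (induct S rule: infinite_finite_induct) (auto simp: smult_add_right)

lemma higher_pderiv_diff:
  fixes p q :: "'a::idom poly"
  shows "(pderiv ^^ k) (p - q) = (pderiv ^^ k) p - (pderiv ^^ k) q"
  by (induct k) (simp_all add: pderiv_diff)

lemma higher_pderiv_eq_0: "degree p < k \<Longrightarrow> (pderiv ^^ k) p = 0"
  by (intro poly_eqI) (simp add: coeff_higher_pderiv coeff_eq_0)

definition dilate :: "real \<Rightarrow> real list \<Rightarrow> real list" where
  "dilate s b = map (\<lambda>k. s ^ k * b ! (k - 1)) [1..<length b + 1]"

lemma length_dilate [simp]: "length (dilate s b) = length b"
  by (simp add: dilate_def del: upt_Suc)

lemma nth_dilate: "k < length b \<Longrightarrow> dilate s b ! k = s ^ Suc k * b ! k"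
  by (simp add: dilate_def nth_map nth_upt del: upt_Suc)

lemma coeff_monic_of:
  "coeff (monic_of b) j = (if j = length b then 1 else if j < length b then b ! (length b - j - 1) else 0)"
proof -
  define n where "n = length b"
  have "(\<Sum>k=1..n. if n - k = j then b ! (k - 1) else 0) = (if j < n then b ! (n - j - 1) else 0)"
  proof (cases "j < n")
    case True
    then have "(\<Sum>k=1..n. if n - k = j then b ! (k - 1) else 0)
        = (\<Sum>k=1..n. if k = n - j then b ! (k - 1) else 0)"
      by (intro sum.cong) auto
    with True show ?thesis
      by (simp add: sum.delta)
  next
    case False
    then show ?thesis
      by (auto intro!: sum.neutral)
  qed
  then show ?thesis
    unfolding monic_of_def n_def[symmetric] coeff_add coeff_sum coeff_monom by auto
qed

lemma degree_monic_of [simp]: "degree (monic_of b) = length b"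
  by (rule antisym; (rule degree_le le_degree)?) (simp_all add: coeff_monic_of)

lemma cpoly_monic_of:
  "cpoly (monic_of b) z = z ^ length b + (\<Sum>k=1..length b. of_real (b ! (k - 1)) * z ^ (length b - k))"
  by (simp add: monic_of_def cpoly_sum)

lemma cpoly_monic_of_dilate:
  "cpoly (monic_of (dilate s b)) (of_real s * z) = of_real s ^ length b * cpoly (monic_of b) z"
proof -
  have term_eq: "of_real (dilate s b ! (k - 1)) * (of_real s * z) ^ (length b - k)
      = of_real s ^ length b * (of_real (b ! (k - 1)) * z ^ (length b - k))"
    if "k \<in> {1..length b}" for k
  proof -
    from that obtain i where "k = Suc i" "i < length b"
      by (cases k) auto
    then have dil: "dilate s b ! (k - 1) = s ^ k * b ! (k - 1)"
      by (simp add: nth_dilate)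
    have pw: "(of_real s :: complex) ^ length b = of_real s ^ k * of_real s ^ (length b - k)"
      using that by (simp flip: power_add)
    show ?thesis
      unfolding dil pw by (simp add: power_mult_distrib algebra_simps)
  qed
  have "(\<Sum>k=1..length b. of_real (dilate s b ! (k - 1)) * (of_real s * z) ^ (length b - k))
      = of_real s ^ length b * (\<Sum>k=1..length b. of_real (b ! (k - 1)) * z ^ (length b - k))"
    unfolding sum_distrib_left by (intro sum.cong refl term_eq)
  then show ?thesis
    by (simp add: cpoly_monic_of distrib_left power_mult_distrib)
qed

lemma hyperbolic_monic_of_dilate:
  assumes "hyperbolic (monic_of b)"
  shows "hyperbolic (monic_of (dilate s b))"
proof (cases "s = 0")
  case True
  then have "dilate s b ! (k - 1) = 0" if "k \<in> {1..length b}" for k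
    using that by (cases k) (simp_all add: nth_dilate)
  then have "cpoly (monic_of (dilate s b)) z = z ^ length b" for z
    by (simp add: cpoly_monic_of)
  then show ?thesis
    unfolding hyperbolic_cpoly by simp
next
  case False
  show ?thesis unfolding hyperbolic_cpoly
  proof (intro allI impI)
    fix z assume "cpoly (monic_of (dilate s b)) z = 0"
    then have "cpoly (monic_of b) (z / of_real s) = 0"
      using False cpoly_monic_of_dilate[of s b "z / of_real s"] by simp
    with assms have "z / of_real s \<in> \<real>"
      by (simp add: hyperbolic_cpoly)
    then show "z \<in> \<real>"
      using False by (metis Reals_mult Reals_of_real nonzero_mult_div_cancel_left of_real_eq_0_iff times_divide_eq_right)
  qed
qed

lemma nuij_op_eq_sum:
  "nuij_op a s p = (\<Sum>k\<le>length a. smult (if k = 0 then 1 else a ! (k - 1) * s ^ k) ((pderiv ^^ k) p))"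
proof -
  have "(\<Sum>k\<le>length a. smult (if k = 0 then 1 else a ! (k - 1) * s ^ k) ((pderiv ^^ k) p))
      = p + (\<Sum>k=Suc 0..length a. smult (if k = 0 then 1 else a ! (k - 1) * s ^ k) ((pderiv ^^ k) p))"
    by (simp add: atMost_atLeast0 sum.atLeast_Suc_atMost)
  also have "(\<Sum>k=Suc 0..length a. smult (if k = 0 then 1 else a ! (k - 1) * s ^ k) ((pderiv ^^ k) p))
      = (\<Sum>k=1..length a. smult (a ! (k - 1) * s ^ k) ((pderiv ^^ k) p))"
    by (rule sum.cong) auto
  finally show ?thesis
    unfolding nuij_op_def by simp
qed

text \<open>For monic \<open>A = (x - r\<^sub>1)\<cdots>(x - r\<^sub>n)\<close> this is \<open>(1 - r\<^sub>1 D)\<cdots>(1 - r\<^sub>n D) p\<close>.\<close>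
definition diff_op :: "nat \<Rightarrow> real poly \<Rightarrow> real poly \<Rightarrow> real poly" where
  "diff_op n A p = (\<Sum>k\<le>n. smult (coeff A (n - k)) ((pderiv ^^ k) p))"

lemma nuij_op_eq_diff_op:
  assumes "length a = d"
  shows "nuij_op a s p = diff_op d (monic_of (dilate s a)) p"
  unfolding nuij_op_eq_sum diff_op_def assms
proof (rule sum.cong)
  fix k assume k: "k \<in> {..d}"
  have "coeff (monic_of (dilate s a)) (d - k) = (if k = 0 then 1 else a ! (k - 1) * s ^ k)"
    using k assms by (cases k) (auto simp: coeff_monic_of nth_dilate)
  then show "smult (if k = 0 then 1 else a ! (k - 1) * s ^ k) ((pderiv ^^ k) p) =
        smult (coeff (monic_of (dilate s a)) (d - k)) ((pderiv ^^ k) p)"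
    by simp
qed simp

lemma diff_op_diff_smult: "diff_op n A (p - smult a q) = diff_op n A p - smult a (diff_op n A q)"
  unfolding diff_op_def
  by (simp add: higher_pderiv_diff higher_pderiv_smult smult_sum_right smult_diff_right
      sum_subtractf algebra_simps)

lemma diff_op_mult_linear:
  assumes "degree A \<le> n"
  shows "diff_op (Suc n) (A * [:-a, 1:]) p = diff_op n A (p - smult a (pderiv p))"
proof -
  have coeff_prod: "coeff (A * [:-a, 1:]) i = coeff (pCons 0 A) i - a * coeff A i" for i
    by (simp add: mult.commute[of A] mult_pCons_left)
  have "diff_op (Suc n) (A * [:-a, 1:]) p
      = (\<Sum>k\<le>Suc n. smult (coeff (pCons 0 A) (Suc n - k)) ((pderiv ^^ k) p))
        - smult a (\<Sum>k\<le>Suc n. smult (coeff A (Suc n - k)) ((pderiv ^^ k) p))"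
    by (simp only: diff_op_def coeff_prod smult_diff_left sum_subtractf smult_sum_right smult_smult)
  also have "(\<Sum>k\<le>Suc n. smult (coeff (pCons 0 A) (Suc n - k)) ((pderiv ^^ k) p)) = diff_op n A p"
    unfolding diff_op_def by (simp add: Suc_diff_le)
  also have "(\<Sum>k\<le>Suc n. smult (coeff A (Suc n - k)) ((pderiv ^^ k) p)) = diff_op n A (pderiv p)"
    using assms unfolding diff_op_def
    by (simp only: sum.atMost_Suc_shift) (simp add: funpow_swap1 coeff_eq_0)
  finally show ?thesis
    by (simp add: diff_op_diff_smult)
qed

lemma hyperbolic_diff_op_prod:
  "hyperbolic p \<Longrightarrow> hyperbolic (diff_op n (\<Prod>j<n. [:- r j, 1:]) p)"
proof (induct n arbitrary: p)
  case 0
  then show ?case by (simp add: diff_op_def)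
next
  case (Suc n)
  have "diff_op (Suc n) (\<Prod>j<Suc n. [:- r j, 1:]) p = diff_op n (\<Prod>j<n. [:- r j, 1:]) (p - smult (r n) (pderiv p))"
    by (simp add: diff_op_mult_linear degree_prod_eq_sum_degree)
  then show ?case
    using Suc hyperbolic_diff_smult_pderiv by simp
qed

lemma monic_hyperbolic_eq_prod:
  assumes "hyperbolic A" "lead_coeff A = 1"
  obtains r where "A = (\<Prod>j<degree A. [:- r j, 1:])"
  using hyperbolic_factor[OF assms(1)] assms(2) by auto

lemma H1_subset_Nuij: "H1 d \<subseteq> Nuij d"
proof
  fix b assume "b \<in> H1 d"
  then have len: "length b = d" and hyp: "hyperbolic (monic_of b)"
    by (auto simp: H1_def)
  show "b \<in> Nuij d" unfolding Nuij_def
  proof (intro CollectI conjI allI impI len)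
    fix p s assume "hyperbolic p \<and> degree p = d"
    moreover obtain r where "monic_of (dilate s b) = (\<Prod>j<d. [:- r j, 1:])"
      using hyperbolic_monic_of_dilate[OF hyp]
      by (rule monic_hyperbolic_eq_prod) (simp_all add: len coeff_monic_of)
    ultimately show "hyperbolic (nuij_op b s p)"
      using hyperbolic_diff_op_prod by (simp add: nuij_op_eq_diff_op[OF len])
  qed
qed

section \<open>Polarization and the Grace--Walsh--Szego theorem\<close>

text \<open>\<open>polarize n Q\<close> is the symmetric multi-affine polarization of \<open>Q\<close>, viewed as a polynomial
  of formal degree \<open>n\<close>. It is built by splitting off one variable at a time using
  Euler's identity \<open>Q = x \<cdot> Q'/(n+1) + (Q - x Q'/(n+1))\<close> for formal degree \<open>n + 1\<close>.\<close>

definition polar_deriv :: "nat \<Rightarrow> real poly \<Rightarrow> real poly" where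
  "polar_deriv n Q = smult (1 / real (Suc n)) (pderiv Q)"

definition polar_rest :: "nat \<Rightarrow> real poly \<Rightarrow> real poly" where
  "polar_rest n Q = Q - smult (1 / real (Suc n)) ([:0, 1:] * pderiv Q)"

fun polarize :: "nat \<Rightarrow> real poly \<Rightarrow> (nat \<Rightarrow> complex) \<Rightarrow> complex" where
  "polarize 0 Q x = of_real (coeff Q 0)"
| "polarize (Suc n) Q x =
     x 0 * polarize n (polar_deriv n Q) (\<lambda>j. x (Suc j)) + polarize n (polar_rest n Q) (\<lambda>j. x (Suc j))"

lemma polar_deriv_add: "polar_deriv n (P + Q) = polar_deriv n P + polar_deriv n Q"
  by (simp add: polar_deriv_def pderiv_add smult_add_right)

lemma polar_rest_add: "polar_rest n (P + Q) = polar_rest n P + polar_rest n Q"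
  by (simp add: polar_rest_def pderiv_add smult_add_right algebra_simps)

lemma polar_deriv_smult: "polar_deriv n (smult c P) = smult c (polar_deriv n P)"
  by (simp add: polar_deriv_def pderiv_smult)

lemma polar_rest_smult: "polar_rest n (smult c P) = smult c (polar_rest n P)"
  by (simp add: polar_rest_def pderiv_smult smult_diff_right mult_smult_right)

lemma polarize_add: "polarize n (P + Q) x = polarize n P x + polarize n Q x"
  by (induct n arbitrary: P Q x) (simp_all add: polar_deriv_add polar_rest_add algebra_simps)

lemma polarize_smult: "polarize n (smult c P) x = of_real c * polarize n P x"
  by (induct n arbitrary: P x) (simp_all add: polar_deriv_smult polar_rest_smult algebra_simps)

lemma polarize_0 [simp]: "polarize n 0 x = 0"
  using polarize_smult[of n 0 0 x] by simp

lemma coeff_polar_rest: "coeff (polar_rest n Q) m = coeff Q m * (real (Suc n) - real m) / real (Suc n)"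
proof -
  have "coeff ([:0, 1:] * pderiv Q) m = of_nat m * coeff Q m"
    by (cases m) (simp_all add: mult_pCons_left coeff_pderiv)
  then show ?thesis
    by (simp add: polar_rest_def field_simps)
qed

lemma degree_polar_deriv: "degree Q \<le> Suc n \<Longrightarrow> degree (polar_deriv n Q) \<le> n"
  by (simp add: polar_deriv_def degree_pderiv)

lemma degree_polar_rest: "degree Q \<le> Suc n \<Longrightarrow> degree (polar_rest n Q) \<le> n"
  by (rule degree_le) (auto simp: coeff_polar_rest coeff_eq_0 le_Suc_eq)

lemma polarize_diagonal: "degree Q \<le> n \<Longrightarrow> polarize n Q (\<lambda>_. w) = cpoly Q w"
proof (induct n arbitrary: Q)
  case 0
  then obtain c where "Q = [:c:]" by (metis degree_eq_zeroE le_zero_eq)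
  then show ?case by simp
next
  case (Suc n)
  then have "polarize (Suc n) Q (\<lambda>_. w) = w * cpoly (polar_deriv n Q) w + cpoly (polar_rest n Q) w"
    by (simp add: degree_polar_deriv degree_polar_rest)
  also have "\<dots> = cpoly Q w"
    by (simp add: polar_deriv_def polar_rest_def algebra_simps)
  finally show ?case .
qed

lemma polarize_const: "polarize n [:c:] x = of_real c"
  by (induct n arbitrary: x) (simp_all add: polar_deriv_def polar_rest_def)

lemma polarize_linear_power:
  "polarize n (smult c ([:-t, 1:] ^ n)) x = of_real c * (\<Prod>j<n. x j - of_real t)"
proof (induct n arbitrary: c x)
  case (Suc n)
  let ?L = "[:-t, 1:] :: real poly"
  have pd: "pderiv (smult c (?L ^ Suc n)) = smult (c * real (Suc n)) (?L ^ n)"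
    by (simp only: pderiv_smult pderiv_power_Suc) (simp add: pderiv_pCons one_pCons[symmetric])
  then have deriv: "polar_deriv n (smult c (?L ^ Suc n)) = smult c (?L ^ n)"
    by (simp add: polar_deriv_def)
  have "polar_rest n (smult c (?L ^ Suc n)) = smult c ([:-t:] * ?L ^ n)"
    unfolding polar_rest_def pd
    by (simp only: power_Suc mult_smult_right smult_smult) (simp flip: smult_diff_right left_diff_distrib)
  also have "\<dots> = smult (- c * t) (?L ^ n)"
    by (simp add: mult_pCons_left)
  finally have rest: "polar_rest n (smult c (?L ^ Suc n)) = smult (- c * t) (?L ^ n)" .
  show ?case
    unfolding polarize.simps deriv rest Suc
    by (simp add: prod.lessThan_Suc_shift algebra_simps del: prod.lessThan_Suc)
qed simp

lemma continuous_on_polarize: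
  assumes "\<And>j. continuous_on S (f j)"
  shows "continuous_on S (\<lambda>s. polarize n Q (\<lambda>j. f j s))"
  using assms by (induct n arbitrary: Q f) (auto intro!: continuous_intros)

text \<open>The weights \<open>(n - k)!/n!\<close> are those cancelled by \<open>bmap\<close>: the Nuij operator of \<open>a\<close> is
  \<open>polar_op d (monic_of (dilate s (bmap d a)))\<close>.\<close>
definition polar_op :: "nat \<Rightarrow> real poly \<Rightarrow> real poly \<Rightarrow> real poly" where
  "polar_op n Q p = (\<Sum>k\<le>n. smult (coeff Q (n - k) * fact (n - k) / fact n) ((pderiv ^^ k) p))"

lemma higher_pderiv_linear_mult:
  "(pderiv ^^ k) ([:-r, 1:] * p)
     = [:-r, 1:] * (pderiv ^^ k) p + smult (of_nat k) ((pderiv ^^ (k - 1)) p)"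
proof (induct k)
  case (Suc k)
  have "(pderiv ^^ Suc k) ([:-r, 1:] * p)
      = [:-r, 1:] * (pderiv ^^ Suc k) p + (pderiv ^^ k) p + smult (of_nat k) (pderiv ((pderiv ^^ (k - 1)) p))"
    using Suc by (simp add: pderiv_add pderiv_mult pderiv_smult pderiv_pCons one_pCons[symmetric])
  also have "smult (of_nat k) (pderiv ((pderiv ^^ (k - 1)) p)) = smult (of_nat k) ((pderiv ^^ k) p)"
    by (cases k) simp_all
  finally show ?case
    by (simp add: smult_add_left add.assoc)
qed simp

lemma polar_op_linear_mult:
  assumes "degree p \<le> n"
  shows "polar_op (Suc n) Q ([:-r, 1:] * p) = [:-r, 1:] * polar_op n (polar_deriv n Q) p + polar_op n (polar_rest n Q) p"
proof -
  define c where "c k = coeff Q (Suc n - k) * fact (Suc n - k) / (fact (Suc n) :: real)" for k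
  have deriv_weight: "c k = coeff (polar_deriv n Q) (n - k) * fact (n - k) / fact n" if "k \<le> n" for k
    using that by (simp add: c_def polar_deriv_def coeff_pderiv Suc_diff_le fact_Suc field_simps del: of_nat_Suc)
  have rest_weight: "c (Suc k) * of_nat (Suc k) = coeff (polar_rest n Q) (n - k) * fact (n - k) / fact n"
    if "k \<le> n" for k
  proof -
    have "real (Suc n) - real (n - k) = real (Suc k)"
      using that by (simp add: of_nat_diff)
    then show ?thesis
      by (simp add: c_def coeff_polar_rest fact_Suc field_simps del: of_nat_Suc)
  qed
  have "polar_op (Suc n) Q ([:-r, 1:] * p)
      = [:-r, 1:] * (\<Sum>k\<le>Suc n. smult (c k) ((pderiv ^^ k) p))
        + (\<Sum>k\<le>Suc n. smult (c k * of_nat k) ((pderiv ^^ (k - 1)) p))"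
    unfolding polar_op_def c_def[symmetric] higher_pderiv_linear_mult
    by (simp only: smult_add_right sum.distrib sum_distrib_left mult_smult_right smult_smult)
  also have "(\<Sum>k\<le>Suc n. smult (c k) ((pderiv ^^ k) p)) = (\<Sum>k\<le>n. smult (c k) ((pderiv ^^ k) p))"
    using assms higher_pderiv_eq_0[of p "Suc n"] by simp
  also have "\<dots> = polar_op n (polar_deriv n Q) p"
    unfolding polar_op_def by (intro sum.cong) (simp_all only: deriv_weight atMost_iff)
  also have "(\<Sum>k\<le>Suc n. smult (c k * of_nat k) ((pderiv ^^ (k - 1)) p))
      = (\<Sum>k\<le>n. smult (c (Suc k) * of_nat (Suc k)) ((pderiv ^^ k) p))"
    by (simp only: sum.atMost_Suc_shift) simp
  also have "\<dots> = polar_op n (polar_rest n Q) p"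
    unfolding polar_op_def by (intro sum.cong) (simp_all only: rest_weight atMost_iff)
  finally show ?thesis .
qed

lemma polar_op_smult: "polar_op n Q (smult a p) = smult a (polar_op n Q p)"
  unfolding polar_op_def higher_pderiv_smult smult_sum_right smult_smult by (simp add: ac_simps)

lemma cpoly_polar_op_prod:
  "cpoly (polar_op n Q (\<Prod>j<n. [:- r j, 1:])) z = polarize n Q (\<lambda>j. z - of_real (r j))"
proof (induct n arbitrary: Q r)
  case 0
  then show ?case by (simp add: polar_op_def)
next
  case (Suc n)
  have "polar_op (Suc n) Q (\<Prod>j<Suc n. [:- r j, 1:])
      = [:-r 0, 1:] * polar_op n (polar_deriv n Q) (\<Prod>j<n. [:- r (Suc j), 1:])
        + polar_op n (polar_rest n Q) (\<Prod>j<n. [:- r (Suc j), 1:])"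
    unfolding prod.lessThan_Suc_shift
    by (rule polar_op_linear_mult) (simp add: degree_prod_eq_sum_degree)
  then show ?case
    by (simp add: Suc algebra_simps)
qed

lemma Im_mult_cnj_neq_0:
  fixes A B :: complex
  assumes "A \<noteq> 0" and "\<And>t. of_real t * A + B \<noteq> 0"
  shows "Im (B * cnj A) \<noteq> 0"
proof
  assume "Im (B * cnj A) = 0"
  then have u: "B * cnj A = of_real (Re (B * cnj A))"
    by (simp add: complex_eq_iff)
  define t where "t = - Re (B * cnj A) / (cmod A)\<^sup>2"
  have "(of_real t * A + B) * cnj A = of_real t * (A * cnj A) + B * cnj A"
    by (simp add: algebra_simps)
  also have "\<dots> = of_real (t * (cmod A)\<^sup>2 + Re (B * cnj A))"
    by (subst u) (simp flip: complex_norm_square)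
  also have "t * (cmod A)\<^sup>2 + Re (B * cnj A) = 0"
    unfolding t_def using assms(1) by simp
  finally show False
    using assms by simp
qed

lemma norm_sum_inverse_i_sub_squared_le:
  fixes m N :: nat
  assumes "m \<le> N"
  shows "(cmod (\<Sum>j<m. 1 / (\<i> - of_real (r j))))\<^sup>2 \<le> real N * - Im (\<Sum>j<m. 1 / (\<i> - of_real (r j)))"
proof -
  define b where "b j = cmod (1 / (\<i> - of_real (r j)))" for j
  have "(b j)\<^sup>2 = 1 / ((r j)\<^sup>2 + 1)" for j
    by (simp add: b_def norm_divide power_divide cmod_power2)
  then have Im_sum: "- Im (\<Sum>j<m. 1 / (\<i> - of_real (r j))) = (\<Sum>j<m. (b j)\<^sup>2)"
    by (simp add: Im_sum Im_inverse_sub_of_real sum_negf)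
  have "cmod (\<Sum>j<m. 1 / (\<i> - of_real (r j))) \<le> (\<Sum>j<m. b j)"
    unfolding b_def by (rule norm_sum)
  then have "(cmod (\<Sum>j<m. 1 / (\<i> - of_real (r j))))\<^sup>2 \<le> (\<Sum>j<m. b j)\<^sup>2"
    by (simp add: power_mono)
  also have "\<dots> \<le> (\<Sum>j<m. (b j)\<^sup>2) * real m"
    using sum_squared_le_sum_of_squares[of b "{..<m}"] by simp
  also have "\<dots> \<le> real N * (\<Sum>j<m. (b j)\<^sup>2)"
    using assms by (subst mult.commute) (intro mult_right_mono; simp add: sum_nonneg)
  finally show ?thesis
    unfolding Im_sum .
qed

text \<open>At the diagonal point \<open>(\<i>, \<dots>, \<i>)\<close> the quantity driving the sign argument below is
  \<open>Im (B cnj A)\<close> with \<open>A = Q'(\<i>)/N\<close> and \<open>B = Q(\<i>) - \<i> A\<close>. Writing \<open>Q' = Q S\<close>, its sign is that of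
  \<open>-Im S - |S|\<^sup>2/N\<close>, which is nonnegative by Cauchy--Schwarz since \<open>-Im S = \<Sum> |1/(\<i> - r\<^sub>j)|\<^sup>2\<close>.\<close>
lemma Im_diagonal_nonneg:
  fixes N :: nat
  assumes hyp: "hyperbolic Q" and deg: "degree Q \<le> N"
  defines "A \<equiv> of_real (1 / real N) * cpoly (pderiv Q) \<i>"
  shows "0 \<le> Im ((cpoly Q \<i> - \<i> * A) * cnj A)"
proof -
  obtain r where logderiv: "cpoly (pderiv Q) \<i> = cpoly Q \<i> * (\<Sum>j<degree Q. 1 / (\<i> - of_real (r j)))"
    using hyperbolic_logderiv[OF hyp] by (metis Im_complex_of_real imaginary_unit.sel(2) zero_less_one)
  define m where "m = degree Q"
  define S where "S = (\<Sum>j<m. 1 / (\<i> - of_real (r j)))"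
  define P where "P = cpoly Q \<i>"
  define c where "c = 1 / real N"
  have "(P - \<i> * (of_real c * (P * S))) * cnj (of_real c * (P * S))
      = of_real c * (P * cnj P) * (cnj S - \<i> * of_real c * (S * cnj S))"
    by (simp add: algebra_simps)
  also have "\<dots> = of_real (c * (cmod P)\<^sup>2) * (cnj S - \<i> * of_real (c * (cmod S)\<^sup>2))"
    unfolding complex_norm_square[symmetric] by simp
  finally have "Im ((P - \<i> * (of_real c * (P * S))) * cnj (of_real c * (P * S)))
      = Im (of_real (c * (cmod P)\<^sup>2) * (cnj S - \<i> * of_real (c * (cmod S)\<^sup>2)))"
    by (rule arg_cong)
  then have eq: "Im ((P - \<i> * (of_real c * (P * S))) * cnj (of_real c * (P * S)))
      = c * (cmod P)\<^sup>2 * (- Im S - c * (cmod S)\<^sup>2)"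
    by (simp only: times_complex.sel minus_complex.sel complex_cnj Im_complex_of_real Re_complex_of_real
        complex_i_mult_minus imaginary_unit.sel) (simp add: algebra_simps)
  have "c * (cmod S)\<^sup>2 \<le> - Im S"
    using norm_sum_inverse_i_sub_squared_le[OF deg[folded m_def], of r]
    unfolding S_def c_def by (cases "N = 0") (simp_all add: field_simps)
  then have "0 \<le> c * (cmod P)\<^sup>2 * (- Im S - c * (cmod S)\<^sup>2)"
    by (simp add: c_def)
  then have "0 \<le> Im ((P - \<i> * (of_real c * (P * S))) * cnj (of_real c * (P * S)))"
    unfolding eq .
  then show ?thesis
    using logderiv by (simp add: A_def P_def S_def c_def m_def)
qed

lemma pos_on_upper_half_planes:
  fixes g :: "(nat \<Rightarrow> complex) \<Rightarrow> real" and n :: nat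
  assumes nonzero: "\<And>y. \<forall>j<n. 0 < Im (y j) \<Longrightarrow> g y \<noteq> 0"
    and cont: "continuous_on {0..1::real} (\<lambda>s. g (\<lambda>j. of_real (1 - s) * \<i> + of_real s * x j))"
    and pos: "0 < g (\<lambda>_. \<i>)" and x: "\<forall>j<n. 0 < Im (x j)"
  shows "0 < g x"
proof (rule ccontr)
  define y where "y s = (\<lambda>j. of_real (1 - s) * \<i> + of_real s * x j)" for s :: real
  assume "\<not> 0 < g x"
  then have "g (y 1) \<le> 0" "0 \<le> g (y 0)"
    using pos by (simp_all add: y_def)
  then obtain s where s: "0 \<le> s" "s \<le> 1" "g (y s) = 0"
    using IVT2'[of "\<lambda>s. g (y s)" 1 0 0] cont unfolding y_def by auto
  have "0 < Im (y s j)" if "j < n" for j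
  proof (cases "s = 0")
    case False
    with s x that have "0 < s * Im (x j)" by simp
    with s show ?thesis by (simp add: y_def)
  qed (simp add: y_def)
  with nonzero s(3) show False
    by blast
qed

lemma polar_deriv_rest_combination:
  "smult t (polar_deriv n Q) + polar_rest n Q = Q - smult (1 / real (Suc n)) ([:-t, 1:] * pderiv Q)"
proof -
  have X: "[:0, 1:] * pderiv Q = [:-t, 1:] * pderiv Q + smult t (pderiv Q)"
    by (simp add: mult_pCons_left)
  show ?thesis
    unfolding polar_deriv_def polar_rest_def X smult_add_right smult_smult
    by (simp add: mult.commute algebra_simps)
qed

lemma Im_polarize_diagonal_nonneg:
  assumes "hyperbolic Q" "degree Q \<le> Suc n"
  shows "0 \<le> Im (polarize n (polar_rest n Q) (\<lambda>_. \<i>) * cnj (polarize n (polar_deriv n Q) (\<lambda>_. \<i>)))"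
proof -
  have "polarize n (polar_deriv n Q) (\<lambda>_. \<i>) = of_real (1 / real (Suc n)) * cpoly (pderiv Q) \<i>"
    "polarize n (polar_rest n Q) (\<lambda>_. \<i>) = cpoly Q \<i> - \<i> * polarize n (polar_deriv n Q) (\<lambda>_. \<i>)"
  proof -
    have "polarize n (polar_deriv n Q) (\<lambda>_. \<i>) = cpoly (polar_deriv n Q) \<i>"
      "polarize n (polar_rest n Q) (\<lambda>_. \<i>) = cpoly (polar_rest n Q) \<i>"
      using assms(2) by (simp_all add: polarize_diagonal degree_polar_deriv degree_polar_rest)
    then show "polarize n (polar_deriv n Q) (\<lambda>_. \<i>) = of_real (1 / real (Suc n)) * cpoly (pderiv Q) \<i>"
      "polarize n (polar_rest n Q) (\<lambda>_. \<i>) = cpoly Q \<i> - \<i> * polarize n (polar_deriv n Q) (\<lambda>_. \<i>)"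
      by (simp_all add: polar_deriv_def polar_rest_def algebra_simps)
  qed
  with Im_diagonal_nonneg[OF assms] show ?thesis
    by simp
qed

lemma continuous_on_Im_polarize_mult_cnj:
  "continuous_on {0..1::real}
     (\<lambda>s. Im (polarize n P (\<lambda>j. of_real (1 - s) * \<i> + of_real s * x j)
               * cnj (polarize n R (\<lambda>j. of_real (1 - s) * \<i> + of_real s * x j))))"
proof -
  have "continuous_on {0..1::real} (\<lambda>s. of_real (1 - s) * \<i> + of_real s * x j)" for j
    by (intro continuous_intros)
  note segment = continuous_on_polarize[OF this]
  show ?thesis
    by (intro continuous_on_Im continuous_on_mult continuous_on_cnj segment)
qed

lemma Im_neg_mult_mult_cnj_neg:
  assumes "0 < Im z" "A \<noteq> 0"
  shows "Im (- z * A * cnj A) < 0"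
proof -
  have "- z * A * cnj A = - z * of_real ((cmod A)\<^sup>2)"
    unfolding complex_norm_square by (simp add: algebra_simps)
  then show ?thesis
    using assms by (simp only:) simp
qed

text \<open>With \<open>polarize (Suc n) Q x = x\<^sub>0 A + B\<close>, the function \<open>g = Im (B cnj A)\<close> of \<open>x\<^sub>1, \<dots>, x\<^sub>n\<close> never
  vanishes, because \<open>t A + B\<close> is a polarization of a polar derivative of \<open>Q\<close> and hence nonzero for
  real \<open>t\<close>. It is positive at \<open>(\<i>, \<dots>, \<i>)\<close>, hence everywhere; but a zero \<open>x\<^sub>0 = -B/A\<close> in the upper half
  plane would force \<open>g = - Im x\<^sub>0 |A|\<^sup>2 < 0\<close>.\<close>
lemma polarize_Suc_nonzero:
  assumes IH: "\<And>Q y. hyperbolic Q \<Longrightarrow> degree Q \<le> n \<Longrightarrow> \<forall>j<n. 0 < Im (y j) \<Longrightarrow> polarize n Q y \<noteq> 0"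
    and hyp: "hyperbolic Q" and deg: "0 < degree Q" "degree Q \<le> Suc n"
    and not_power: "\<And>c t. Q \<noteq> smult c ([:-t, 1:] ^ Suc n)"
    and x: "\<forall>j<Suc n. 0 < Im (x j)"
  shows "polarize (Suc n) Q x \<noteq> 0"
proof
  define A where "A y = polarize n (polar_deriv n Q) y" for y
  define B where "B y = polarize n (polar_rest n Q) y" for y
  define g where "g y = Im (B y * cnj (A y))" for y
  have A_nonzero: "A y \<noteq> 0" if "\<forall>j<n. 0 < Im (y j)" for y
    unfolding A_def polar_deriv_def using hyp deg that
    by (intro IH) (simp_all add: hyperbolic_smult_iff hyperbolic_pderiv degree_pderiv)
  have real_combination: "of_real t * A y + B y \<noteq> 0" if "\<forall>j<n. 0 < Im (y j)" for y t
  proof -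
    have "hyperbolic (smult t (polar_deriv n Q) + polar_rest n Q)"
      unfolding polar_deriv_rest_combination
      by (rule hyperbolic_polar_derivative[OF hyp deg(2) not_power])
    moreover have "degree (smult t (polar_deriv n Q) + polar_rest n Q) \<le> n"
      using degree_polar_deriv[OF deg(2)] degree_polar_rest[OF deg(2)]
      by (intro degree_add_le) (simp_all add: order.trans[OF degree_smult_le])
    ultimately have "polarize n (smult t (polar_deriv n Q) + polar_rest n Q) y \<noteq> 0"
      using IH that by blast
    then show ?thesis
      by (simp add: A_def B_def polarize_add polarize_smult)
  qed
  have g_nonzero: "g y \<noteq> 0" if "\<forall>j<n. 0 < Im (y j)" for y
    unfolding g_def by (rule Im_mult_cnj_neq_0[OF A_nonzero[OF that] real_combination[OF that]])
  have g_diagonal: "0 < g (\<lambda>_. \<i>)"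
    using Im_polarize_diagonal_nonneg[OF hyp deg(2)] g_nonzero[of "\<lambda>_. \<i>"]
    unfolding g_def A_def B_def by simp
  have g_continuous: "continuous_on {0..1::real} (\<lambda>s. g (\<lambda>j. of_real (1 - s) * \<i> + of_real s * x (Suc j)))"
    unfolding g_def A_def B_def by (rule continuous_on_Im_polarize_mult_cnj)
  have g_pos: "0 < g (\<lambda>j. x (Suc j))"
    using pos_on_upper_half_planes[where x="\<lambda>j. x (Suc j)", OF g_nonzero g_continuous g_diagonal] x
    by simp
  assume "polarize (Suc n) Q x = 0"
  then have "B (\<lambda>j. x (Suc j)) = - x 0 * A (\<lambda>j. x (Suc j))"
    unfolding A_def B_def by (simp add: eq_neg_iff_add_eq_0 add.commute)
  then have "g (\<lambda>j. x (Suc j)) = Im (- x 0 * A (\<lambda>j. x (Suc j)) * cnj (A (\<lambda>j. x (Suc j))))"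
    unfolding g_def by simp
  also have "\<dots> < 0"
    using x by (intro Im_neg_mult_mult_cnj_neg A_nonzero) simp_all
  finally show False
    using g_pos
    by simp
qed

lemma polarize_nonzero:
  "hyperbolic Q \<Longrightarrow> degree Q \<le> n \<Longrightarrow> \<forall>j<n. 0 < Im (x j) \<Longrightarrow> polarize n Q x \<noteq> 0"
proof (induct n arbitrary: Q x)
  case 0
  then obtain c where "Q = [:c:]"
    by (metis degree_eq_zeroE le_zero_eq)
  with hyperbolic_nonzero[OF 0(1)] show ?case
    by simp
next
  case (Suc n)
  consider "degree Q = 0" | c t where "Q = smult c ([:-t, 1:] ^ Suc n)"
    | "0 < degree Q" "\<And>c t. Q \<noteq> smult c ([:-t, 1:] ^ Suc n)"
    by blast
  then show ?case
  proof cases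
    case 1
    then obtain c where "Q = [:c:]"
      by (rule degree_eq_zeroE)
    with hyperbolic_nonzero[OF Suc(2)] show ?thesis
      by (simp add: polarize_const)
  next
    case 2
    moreover have "x j - of_real t \<noteq> 0" if "j < Suc n" for j
      using Suc(4) that by (auto simp: complex_eq_iff)
    ultimately show ?thesis
      using hyperbolic_nonzero[OF Suc(2)]
      by (simp only: polarize_linear_power) (simp del: power_Suc)
  next
    case 3
    with Suc show ?thesis
      by (intro polarize_Suc_nonzero) blast+
  qed
qed

section \<open>Nuij sequences\<close>

lemma length_bmap [simp]: "length (bmap d a) = d"
  by (simp add: bmap_def del: upt_Suc)

lemma nth_bmap: "k < d \<Longrightarrow> bmap d a ! k = fact d / fact (d - Suc k) * a ! k"
  by (simp add: bmap_def nth_map nth_upt del: upt_Suc)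

lemma dilate_1 [simp]: "dilate 1 b = b"
  by (rule nth_equalityI) (simp_all add: nth_dilate)

lemma nuij_op_eq_polar_op:
  assumes "length a = d"
  shows "nuij_op a s p = polar_op d (monic_of (dilate s (bmap d a))) p"
  unfolding nuij_op_eq_sum polar_op_def assms
proof (rule sum.cong)
  fix k assume "k \<in> {..d}"
  then have "coeff (monic_of (dilate s (bmap d a))) (d - k) * fact (d - k) / fact d
      = (if k = 0 then 1 else a ! (k - 1) * s ^ k)"
    by (cases k) (auto simp: coeff_monic_of nth_dilate nth_bmap)
  then show "smult (if k = 0 then 1 else a ! (k - 1) * s ^ k) ((pderiv ^^ k) p)
      = smult (coeff (monic_of (dilate s (bmap d a))) (d - k) * fact (d - k) / fact d) ((pderiv ^^ k) p)"
    by simp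
qed simp

lemma Nuij_subset_bmap_preimage: "Nuij d \<subseteq> {a. length a = d \<and> bmap d a \<in> H1 d}"
proof
  fix a assume "a \<in> Nuij d"
  then have len: "length a = d"
    and nuij: "\<And>p s. hyperbolic p \<Longrightarrow> degree p = d \<Longrightarrow> hyperbolic (nuij_op a s p)"
    by (auto simp: Nuij_def)
  define Q where "Q = monic_of (bmap d a)"
  have "hyperbolic (\<Prod>j<d. [:- 0, 1:])"
    unfolding hyperbolic_iff_upper_half_plane cpoly_prod by auto
  then have "hyperbolic (nuij_op a 1 (\<Prod>j<d. [:- 0, 1:]))"
    by (rule nuij) (simp add: degree_linear_power)
  moreover have "cpoly (nuij_op a 1 (\<Prod>j<d. [:- 0, 1:])) z = cpoly Q z" for z
    using cpoly_polar_op_prod[of d Q "\<lambda>_. 0" z]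
    by (simp add: nuij_op_eq_polar_op[OF len] Q_def polarize_diagonal)
  ultimately have "hyperbolic Q"
    using hyperbolic_cong by blast
  with len show "a \<in> {a. length a = d \<and> bmap d a \<in> H1 d}"
    by (simp add: Q_def H1_def)
qed

lemma bmap_preimage_subset_Nuij: "{a. length a = d \<and> bmap d a \<in> H1 d} \<subseteq> Nuij d"
proof
  fix a assume "a \<in> {a. length a = d \<and> bmap d a \<in> H1 d}"
  then have len: "length a = d" and hyp: "hyperbolic (monic_of (bmap d a))"
    by (auto simp: H1_def)
  show "a \<in> Nuij d" unfolding Nuij_def
  proof (intro CollectI conjI allI impI len)
    fix p s assume p: "hyperbolic p \<and> degree p = d"
    define Q where "Q = monic_of (dilate s (bmap d a))"
    have hyp_Q: "hyperbolic Q"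
      unfolding Q_def by (rule hyperbolic_monic_of_dilate[OF hyp])
    obtain r where r: "p = smult (lead_coeff p) (\<Prod>j<d. [:- r j, 1:])"
      using hyperbolic_factor p by metis
    have "lead_coeff p \<noteq> 0"
      using hyperbolic_nonzero p by (metis leading_coeff_neq_0)
    moreover have "polarize d Q (\<lambda>j. z - of_real (r j)) \<noteq> 0" if "0 < Im z" for z
      using that by (intro polarize_nonzero[OF hyp_Q]) (simp_all add: Q_def)
    ultimately show "hyperbolic (nuij_op a s p)"
      unfolding hyperbolic_iff_upper_half_plane nuij_op_eq_polar_op[OF len] Q_def[symmetric]
      by (subst r) (simp add: polar_op_smult cpoly_polar_op_prod)
  qed
qed

theorem corollary2p4:
  fixes d :: nat
  assumes "d \<ge> 1"
  shows "H1 d \<subseteq> Nuij d \<and> Nuij d = {a. length a = d \<and> bmap d a \<in> H1 d}"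
  using H1_subset_Nuij Nuij_subset_bmap_preimage bmap_preimage_subset_Nuij by blast

end
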